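(* Let $J\subseteq\mathbb{M}_2$ be a bigraded ideal and $f:\Sigma^{p,q}J\to\mathbb{M}_2$ a nonzero bigraded $\mathbb{M}_2$-module homomorphism. Then exactly one of the following holds: (I) $J$ is of type I and either (i) there are $m,n\ge0$ with $\rho^m\tau^n\in J$ and $f(\rho^m\tau^n)=\rho^a\tau^b$ for some $a\ge m$, $b\ge n$; or (ii) there are $m,n\ge0$ with $\rho^m\tau^n\in J$ and $f(\rho^m\tau^n)=\frac{\theta}{\rho^a\tau^b}$ for some $a,b\ge0$; (II) $J$ is of type II and there are $m,n\ge0$ with $\frac{\theta}{\rho^m\tau^n}\in J$ and $f\big(\frac{\theta}{\rho^m\tau^n}\big)=\frac{\theta}{\rho^a\tau^b}$ for some $0\le a\le m$, $0\le b\le n$.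
   Context: $\mathbb{M}_2$ is the bigraded commutative $\mathbb{F}_2$-algebra with $\mathbb{F}_2$-basis the elements $\rho^m\tau^n$ ($m,n\ge0$) in bidegree $(m,m+n)$ and $\frac{\theta}{\rho^m\tau^n}$ ($m,n\ge 0$) in bidegree $(-m,-2-m-n)$; multiplication: $\rho^a\tau^b\cdot\rho^c\tau^d=\rho^{a+c}\tau^{b+d}$, $\rho^a\tau^b\cdot\frac{\theta}{\rho^c\tau^d}=\frac{\theta}{\rho^{c-a}\tau^{d-b}}$ if $a\le c,b\le d$ and $0$ otherwise, and the product of two elements of the form $\frac{\theta}{\rho^c\tau^d}$ is $0$. $\mathbb{M}_2^+$ is the span of the $\rho^m\tau^n$ and $\mathbb{M}_2^-$ the span of the $\frac{\theta}{\rho^m\tau^n}$. A bigraded ideal $J$ is of type I if it is generated by finitely many homogeneous elements of $\mathbb{M}_2^+$ and $J\cap\mathbb{M}_2^-=\mathbb{M}_2^-$, and of type II if $J\cap\mathbb{M}_2^+=0$ (every bigraded ideal is of one of these types). $\Sigma^{p,q}J$ is the shift with $(\Sigma^{p,q}J)^{a,b}=J^{a-p,b-q}$; module maps preserve bidegree. *)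

theory Defs
  imports Main
begin

text \<open>Model of M_2: F_2-vector space with basis elements
  P m n  = rho^m tau^n  and  N m n = theta/(rho^m tau^n).
  An element is a finite set of basis elements (F_2 coefficients);
  addition is symmetric difference.\<close>

datatype mbasis = P nat nat | N nat nat

type_synonym m2 = "mbasis set"

definition M2 :: "m2 set" where
  "M2 = {x. finite x}"

fun bmul :: "mbasis \<Rightarrow> mbasis \<Rightarrow> mbasis option" where
  "bmul (P a b) (P c d) = Some (P (a + c) (b + d))"
| "bmul (P a b) (N c d) = (if a \<le> c \<and> b \<le> d then Some (N (c - a) (d - b)) else None)"
| "bmul (N c d) (P a b) = (if a \<le> c \<and> b \<le> d then Some (N (c - a) (d - b)) else None)"
| "bmul (N _ _) (N _ _) = None"

definition madd :: "m2 \<Rightarrow> m2 \<Rightarrow> m2" where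
  "madd x y = (x - y) \<union> (y - x)"

definition mmul :: "m2 \<Rightarrow> m2 \<Rightarrow> m2" where
  "mmul x y = {z. odd (card {(u, v). u \<in> x \<and> v \<in> y \<and> bmul u v = Some z})}"

fun bdeg :: "mbasis \<Rightarrow> int \<times> int" where
  "bdeg (P m n) = (int m, int m + int n)"
| "bdeg (N m n) = (- int m, - 2 - int m - int n)"

definition homog :: "int \<times> int \<Rightarrow> m2 \<Rightarrow> bool" where
  "homog d x \<longleftrightarrow> x \<in> M2 \<and> (\<forall>u\<in>x. bdeg u = d)"

definition comp :: "int \<times> int \<Rightarrow> m2 \<Rightarrow> m2" where
  "comp d x = {u \<in> x. bdeg u = d}"

definition Mplus :: "m2 set" where
  "Mplus = {x \<in> M2. \<forall>u\<in>x. \<exists>m n. u = P m n}"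

definition Mminus :: "m2 set" where
  "Mminus = {x \<in> M2. \<forall>u\<in>x. \<exists>m n. u = N m n}"

definition m2_ideal :: "m2 set \<Rightarrow> bool" where
  "m2_ideal J \<longleftrightarrow> J \<subseteq> M2 \<and> {} \<in> J \<and> (\<forall>x\<in>J. \<forall>y\<in>J. madd x y \<in> J)
     \<and> (\<forall>r\<in>M2. \<forall>x\<in>J. mmul r x \<in> J)"

definition bigraded_ideal :: "m2 set \<Rightarrow> bool" where
  "bigraded_ideal J \<longleftrightarrow> m2_ideal J \<and> (\<forall>x\<in>J. \<forall>d. comp d x \<in> J)"

definition gen_ideal :: "m2 set \<Rightarrow> m2 set" where
  "gen_ideal G = \<Inter>{I. m2_ideal I \<and> G \<subseteq> I}"

definition typeI :: "m2 set \<Rightarrow> bool" where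
  "typeI J \<longleftrightarrow> (\<exists>G. finite G \<and> G \<subseteq> Mplus \<and> (\<forall>g\<in>G. \<exists>d. homog d g)
      \<and> J = gen_ideal G) \<and> J \<inter> Mminus = Mminus"

definition typeII :: "m2 set \<Rightarrow> bool" where
  "typeII J \<longleftrightarrow> J \<inter> Mplus = {{}}"

text \<open>A bigraded M_2-module homomorphism f : Sigma^{p,q} J \<rightarrow> M_2 (only its values
  on J matter). An element of J of bidegree d has bidegree d + (p,q) in Sigma^{p,q} J.\<close>
definition shifted_hom :: "int \<Rightarrow> int \<Rightarrow> m2 set \<Rightarrow> (m2 \<Rightarrow> m2) \<Rightarrow> bool" where
  "shifted_hom p q J f \<longleftrightarrow>
     (\<forall>x\<in>J. f x \<in> M2)
   \<and> (\<forall>x\<in>J. \<forall>y\<in>J. f (madd x y) = madd (f x) (f y))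
   \<and> (\<forall>r\<in>M2. \<forall>x\<in>J. f (mmul r x) = mmul r (f x))
   \<and> (\<forall>x\<in>J. \<forall>d. homog d x \<longrightarrow> homog (fst d + p, snd d + q) (f x))"

end

theory Submission
  imports Defs
begin

text \<open>A nonzero homomorphism is nonzero on some basis element \<open>u\<close> of \<open>J\<close> (bigraded ideals are
  spanned by their basis elements), and by degree reasons \<open>f {u}\<close> is a single basis element \<open>v\<close>.
  Module linearity forces every \<open>w\<close> annihilating \<open>u\<close> to annihilate \<open>v\<close>; testing this with the
  \<open>w\<close> that sends \<open>v\<close> to \<open>\<theta>\<close> gives the divisibility constraints on \<open>v\<close>. The type of \<open>J\<close> is
  decided by whether it contains some \<open>\<rho>\<^sup>m\<tau>\<^sup>n\<close>: if so, it is generated by the finitely many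
  minimal such monomials and contains all of \<open>\<M>\<^sub>2\<^sup>-\<close>, since every \<open>\<theta>/\<rho>\<^sup>i\<tau>\<^sup>j\<close> is a
  multiple of \<open>\<rho>\<^sup>m\<tau>\<^sup>n\<close>.\<close>

lemma bdeg_inj: "bdeg u = bdeg v \<Longrightarrow> u = v"
  by (cases u; cases v) auto

lemma mmul_singleton: "mmul {u} {v} = (case bmul u v of None \<Rightarrow> {} | Some z \<Rightarrow> {z})"
proof -
  have "{(a, b). a \<in> {u} \<and> b \<in> {v} \<and> bmul a b = Some z} = (if bmul u v = Some z then {(u, v)} else {})"
    for z by auto
  then show ?thesis unfolding mmul_def by (auto split: option.split)
qed

lemma mmul_empty_right [simp]: "mmul r {} = {}"
  unfolding mmul_def by auto

lemma madd_singleton_disjoint: "u \<notin> x \<Longrightarrow> madd {u} x = insert u x"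
  by (auto simp: madd_def)

lemma m2_ideal_zero: "m2_ideal {{}}"
  by (simp add: m2_ideal_def M2_def madd_def)

lemma m2_ideal_mult_singleton: "m2_ideal I \<Longrightarrow> x \<in> I \<Longrightarrow> mmul {r} x \<in> I"
  by (simp add: m2_ideal_def M2_def)

lemma m2_ideal_finite_sum:
  assumes "m2_ideal I" "finite x" "\<forall>u\<in>x. {u} \<in> I"
  shows "x \<in> I"
  using assms(2,3)
proof (induction x rule: finite_induct)
  case empty
  then show ?case using assms(1) by (simp add: m2_ideal_def)
next
  case (insert u x)
  then have "madd {u} x \<in> I" using assms(1) by (simp add: m2_ideal_def)
  with insert.hyps show ?case by (simp add: madd_singleton_disjoint)
qed

lemma m2_ideal_finite: "m2_ideal I \<Longrightarrow> x \<in> I \<Longrightarrow> finite x"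
  by (auto simp: m2_ideal_def M2_def)

lemma bigraded_ideal_imp_m2_ideal: "bigraded_ideal J \<Longrightarrow> m2_ideal J"
  by (simp add: bigraded_ideal_def)

lemma bigraded_ideal_singleton:
  assumes "bigraded_ideal J" "x \<in> J" "u \<in> x"
  shows "{u} \<in> J"
proof -
  have "comp (bdeg u) x = {u}" using assms(3) bdeg_inj by (auto simp: comp_def)
  with assms(1,2) show ?thesis unfolding bigraded_ideal_def by metis
qed

lemma N_in_ideal_if_P_in_ideal:
  assumes "m2_ideal I" "{P a b} \<in> I"
  shows "{N i j} \<in> I"
  using m2_ideal_mult_singleton[OF assms, of "N (i + a) (j + b)"] by (simp add: mmul_singleton)

lemma P_in_ideal_if_divisor_in_ideal:
  assumes "m2_ideal I" "{P a0 b0} \<in> I" "a0 \<le> a" "b0 \<le> b"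
  shows "{P a b} \<in> I"
  using m2_ideal_mult_singleton[OF assms(1,2), of "P (a - a0) (b - b0)"] assms(3,4)
  by (simp add: mmul_singleton)

lemma Mminus_subset_ideal_if_P_in_ideal:
  assumes "m2_ideal I" "{P a b} \<in> I"
  shows "Mminus \<subseteq> I"
proof
  fix x assume "x \<in> Mminus"
  then have "finite x" "\<forall>u\<in>x. \<exists>i j. u = N i j" by (auto simp: Mminus_def M2_def)
  then have "\<forall>u\<in>x. {u} \<in> I" using N_in_ideal_if_P_in_ideal[OF assms] by auto
  with \<open>finite x\<close> show "x \<in> I" using m2_ideal_finite_sum[OF assms(1)] by blast
qed

definition minimal_pairs :: "(nat \<times> nat) set \<Rightarrow> (nat \<times> nat) set" where
  "minimal_pairs S = {(a, b) \<in> S. \<forall>(a', b')\<in>S. a' \<le> a \<and> b' \<le> b \<longrightarrow> a' = a \<and> b' = b}"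

lemma minimal_pairs_below:
  assumes "(a, b) \<in> S"
  obtains a0 b0 where "(a0, b0) \<in> minimal_pairs S" "a0 \<le> a" "b0 \<le> b"
proof -
  let ?below = "\<lambda>(a', b'). (a', b') \<in> S \<and> a' \<le> a \<and> b' \<le> b"
  obtain z where "?below z" and least: "\<And>y. ?below y \<Longrightarrow> fst z + snd z \<le> fst y + snd y"
    using ex_has_least_nat[of ?below "(a, b)" "\<lambda>(x, y). x + y"] assms by auto
  then obtain a0 b0 where z: "z = (a0, b0)" "(a0, b0) \<in> S" "a0 \<le> a" "b0 \<le> b"
    by (cases z) auto
  have "(a0, b0) \<in> minimal_pairs S"
    unfolding minimal_pairs_def using z least by fastforce
  with z that show ?thesis by blast
qed

lemma minimal_pairs_subset: "minimal_pairs S \<subseteq> S"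
  unfolding minimal_pairs_def by auto

lemma minimal_pairs_le_eq:
  "(a, b) \<in> minimal_pairs S \<Longrightarrow> (a', b') \<in> minimal_pairs S \<Longrightarrow> a' \<le> a \<Longrightarrow> b' \<le> b \<Longrightarrow> a' = a \<and> b' = b"
  unfolding minimal_pairs_def by blast

text \<open>Minimal pairs form an antichain, so both coordinate projections are injective on them,
  and each minimal pair lies left of or below any fixed \<open>(m, n) \<in> S\<close>.\<close>

lemma finite_minimal_pairs: "finite (minimal_pairs S)"
proof (cases "S = {}")
  case False
  then obtain m n where mn: "(m, n) \<in> S" by auto
  have "inj_on fst (minimal_pairs S)" "inj_on snd (minimal_pairs S)"
    unfolding inj_on_def using minimal_pairs_le_eq nat_le_linear by (metis prod.collapse)+
  then have "finite (fst -` {..m} \<inter> minimal_pairs S)" "finite (snd -` {..n} \<inter> minimal_pairs S)"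
    by (simp_all add: finite_vimage_IntI)
  moreover have "minimal_pairs S \<subseteq> (fst -` {..m} \<inter> minimal_pairs S) \<union> (snd -` {..n} \<inter> minimal_pairs S)"
    using mn unfolding minimal_pairs_def by force
  ultimately show ?thesis by (meson finite_UnI finite_subset)
qed (simp add: minimal_pairs_def)

lemma gen_ideal_least: "m2_ideal I \<Longrightarrow> G \<subseteq> I \<Longrightarrow> gen_ideal G \<subseteq> I"
  unfolding gen_ideal_def by blast

lemma bigraded_ideal_eq_gen_ideal_minimal_monomials:
  assumes J: "bigraded_ideal J" and "{P m n} \<in> J"
  defines "G \<equiv> (\<lambda>(a, b). {P a b}) ` minimal_pairs {(a, b). {P a b} \<in> J}"
  shows "J = gen_ideal G"
proof
  have "G \<subseteq> J"
  proof
    fix g assume "g \<in> G"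
    then obtain a b where "(a, b) \<in> minimal_pairs {(a, b). {P a b} \<in> J}" "g = {P a b}"
      unfolding G_def by auto
    then show "g \<in> J" using minimal_pairs_subset by blast
  qed
  then show "gen_ideal G \<subseteq> J" using gen_ideal_least bigraded_ideal_imp_m2_ideal[OF J] by blast
next
  have "J \<subseteq> I" if I: "m2_ideal I" "G \<subseteq> I" for I
  proof
    fix x assume "x \<in> J"
    have x: "finite x" "\<forall>u\<in>x. {u} \<in> J"
      using m2_ideal_finite[OF bigraded_ideal_imp_m2_ideal[OF J] \<open>x \<in> J\<close>]
        bigraded_ideal_singleton[OF J \<open>x \<in> J\<close>] by blast+
    have P_in_I: "{P a b} \<in> I" if "{P a b} \<in> J" for a b
    proof -
      have "(a, b) \<in> {(a, b). {P a b} \<in> J}" using that by simp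
      then obtain a0 b0 where "(a0, b0) \<in> minimal_pairs {(a, b). {P a b} \<in> J}" "a0 \<le> a" "b0 \<le> b"
        by (rule minimal_pairs_below)
      moreover from this have "{P a0 b0} \<in> G" unfolding G_def by force
      ultimately show ?thesis using I P_in_ideal_if_divisor_in_ideal by blast
    qed
    have "{u} \<in> I" if "u \<in> x" for u
    proof (cases u)
      case (N i j)
      show ?thesis using N P_in_I[OF \<open>{P m n} \<in> J\<close>] N_in_ideal_if_P_in_ideal[OF I(1)] by blast
    qed (use P_in_I x that in auto)
    with x I(1) show "x \<in> I" using m2_ideal_finite_sum by blast
  qed
  then show "J \<subseteq> gen_ideal G" unfolding gen_ideal_def by blast
qed

lemma typeI_if_P_in_bigraded_ideal:
  assumes J: "bigraded_ideal J" and P: "{P m n} \<in> J"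
  shows "typeI J"
proof -
  let ?G = "(\<lambda>(a, b). {P a b}) ` minimal_pairs {(a, b). {P a b} \<in> J}"
  have "finite ?G" "?G \<subseteq> Mplus" "\<forall>g\<in>?G. \<exists>d. homog d g"
    using finite_minimal_pairs by (auto simp: Mplus_def homog_def M2_def)
  moreover have "J \<inter> Mminus = Mminus"
    using Mminus_subset_ideal_if_P_in_ideal[OF bigraded_ideal_imp_m2_ideal[OF J] P] by blast
  ultimately show ?thesis
    unfolding typeI_def using bigraded_ideal_eq_gen_ideal_minimal_monomials[OF J P] by blast
qed

lemma P_in_bigraded_ideal_if_not_typeII:
  assumes "bigraded_ideal J" "\<not> typeII J"
  shows "\<exists>m n. {P m n} \<in> J"
proof -
  have "{} \<in> J \<inter> Mplus"
    using assms(1) by (simp add: bigraded_ideal_def m2_ideal_def Mplus_def M2_def)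
  then obtain y u where "y \<in> J" "y \<in> Mplus" "u \<in> y"
    using assms(2) unfolding typeII_def by blast
  moreover from this obtain m n where "u = P m n" unfolding Mplus_def by blast
  ultimately show ?thesis using bigraded_ideal_singleton[OF assms(1)] by blast
qed

lemma P_notin_typeII: "typeII J \<Longrightarrow> {P m n} \<notin> J"
  by (auto simp: typeII_def Mplus_def M2_def)

lemma not_typeII_if_typeI:
  assumes "typeI J"
  shows "\<not> typeII J"
proof
  assume "typeII J"
  obtain G where G: "G \<subseteq> Mplus" "J = gen_ideal G" and "Mminus \<subseteq> J"
    using assms unfolding typeI_def by blast
  have "G \<subseteq> J \<inter> Mplus" using G unfolding gen_ideal_def by blast
  with \<open>typeII J\<close> have "G \<subseteq> {{}}" by (simp add: typeII_def)
  then have "gen_ideal G \<subseteq> {{}}"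
    using m2_ideal_zero unfolding gen_ideal_def by (intro Inter_lower) simp
  with G(2) have "J \<subseteq> {{}}" by simp
  moreover have "{N 0 0} \<in> Mminus" by (simp add: Mminus_def M2_def)
  ultimately show False using \<open>Mminus \<subseteq> J\<close> by blast
qed

context
  fixes p q :: int and J :: "m2 set" and f :: "m2 \<Rightarrow> m2"
  assumes J: "m2_ideal J" and hom: "shifted_hom p q J f"
begin

lemma hom_empty: "f {} = {}"
proof -
  have "{} \<in> J" using J by (simp add: m2_ideal_def)
  then have "f (madd {} {}) = madd (f {}) (f {})" using hom by (simp add: shifted_hom_def)
  then show ?thesis by (simp add: madd_def)
qed

lemma hom_mmul_singleton: "x \<in> J \<Longrightarrow> f (mmul {r} x) = mmul {r} (f x)"
  using hom by (simp add: shifted_hom_def M2_def)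

lemma hom_eq_empty_if_empty_on_basis:
  assumes "finite x" "\<forall>u\<in>x. {u} \<in> J \<and> f {u} = {}"
  shows "f x = {}"
  using assms
proof (induction x rule: finite_induct)
  case empty
  show ?case by (rule hom_empty)
next
  case (insert u x)
  then have u: "{u} \<in> J" "f {u} = {}" and x: "\<forall>v\<in>x. {v} \<in> J \<and> f {v} = {}" by simp_all
  then have "x \<in> J" using m2_ideal_finite_sum[OF J insert.hyps(1)] by blast
  with u(1) have "f (madd {u} x) = madd (f {u}) (f x)" using hom by (simp add: shifted_hom_def)
  also have "\<dots> = {}" using u(2) insert.IH[OF x] by (simp add: madd_def)
  finally show ?case using insert.hyps(2) by (simp add: madd_singleton_disjoint)
qed

lemma hom_nonzero_on_basis:
  assumes "bigraded_ideal J" "x \<in> J" "f x \<noteq> {}"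
  obtains u where "{u} \<in> J" "f {u} \<noteq> {}"
proof -
  have x: "finite x" "\<forall>u\<in>x. {u} \<in> J"
    using m2_ideal_finite[OF J assms(2)] bigraded_ideal_singleton[OF assms(1,2)] by blast+
  then have "\<not> (\<forall>u\<in>x. {u} \<in> J \<and> f {u} = {})"
    using assms(3) hom_eq_empty_if_empty_on_basis by blast
  with x show ?thesis using that by blast
qed

lemma hom_basis_image: "{u} \<in> J \<Longrightarrow> f {u} = {} \<or> (\<exists>v. f {u} = {v})"
proof -
  assume "{u} \<in> J"
  moreover have "homog (bdeg u) {u}" by (simp add: homog_def M2_def)
  ultimately have "homog (fst (bdeg u) + p, snd (bdeg u) + q) (f {u})"
    using hom by (simp add: shifted_hom_def)
  then have "\<forall>a\<in>f {u}. \<forall>b\<in>f {u}. a = b" using bdeg_inj by (simp add: homog_def)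
  then show ?thesis by blast
qed

lemma hom_preserves_annihilator:
  assumes "{u} \<in> J" "f {u} = {v}" "bmul w u = None"
  shows "bmul w v = None"
proof -
  have "mmul {w} {v} = f (mmul {w} {u})" using hom_mmul_singleton assms(1,2) by simp
  also have "\<dots> = {}" using assms(3) hom_empty by (simp add: mmul_singleton)
  finally show ?thesis by (simp add: mmul_singleton split: option.splits)
qed

lemma hom_image_of_P:
  assumes "{P m n} \<in> J" "f {P m n} = {P a b}"
  shows "m \<le> a \<and> n \<le> b"
  using hom_preserves_annihilator[OF assms, of "N a b"] by (cases "m \<le> a \<and> n \<le> b") auto

lemma hom_image_of_N:
  assumes "{N m n} \<in> J" "f {N m n} = {v}"
  shows "\<exists>a b. a \<le> m \<and> b \<le> n \<and> v = N a b"
proof (cases v)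
  case (P a b)
  then show ?thesis using hom_preserves_annihilator[OF assms, of "N a b"] by simp
next
  case (N a b)
  then show ?thesis using hom_preserves_annihilator[OF assms, of "P a b"] by (cases "a \<le> m \<and> b \<le> n") auto
qed

lemma hom_nonzero_on_P_if_nonzero_on_N:
  assumes "{P m n} \<in> J" "f {N i j} \<noteq> {}"
  shows "f {P m n} \<noteq> {}"
proof
  assume "f {P m n} = {}"
  then have "f (mmul {N (i + m) (j + n)} {P m n}) = {}"
    using hom_mmul_singleton[OF assms(1)] by simp
  with assms(2) show False by (simp add: mmul_singleton)
qed

lemma hom_typeII_witness:
  assumes "typeII J" "{u} \<in> J" "f {u} \<noteq> {}"
  shows "\<exists>m n. {N m n} \<in> J \<and> (\<exists>a b. a \<le> m \<and> b \<le> n \<and> f {N m n} = {N a b})"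
proof -
  obtain m n where mn: "u = N m n"
  proof (cases u)
    case (P a b)
    then show ?thesis using assms(2) P_notin_typeII[OF assms(1)] by simp
  qed
  have N: "{N m n} \<in> J" using assms(2) mn by simp
  moreover obtain v where v: "f {N m n} = {v}" using hom_basis_image[OF N] assms(3) mn by auto
  ultimately show ?thesis using hom_image_of_N[OF N v] by auto
qed

lemma hom_typeI_witness:
  assumes "{P m\<^sub>1 n\<^sub>1} \<in> J" "{u} \<in> J" "f {u} \<noteq> {}"
  shows "(\<exists>m n. {P m n} \<in> J \<and> (\<exists>a b. a \<ge> m \<and> b \<ge> n \<and> f {P m n} = {P a b}))
    \<or> (\<exists>m n. {P m n} \<in> J \<and> (\<exists>a b. f {P m n} = {N a b}))"
proof -
  have "\<exists>m n. {P m n} \<in> J \<and> f {P m n} \<noteq> {}"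
  proof (cases u)
    case (N i j)
    then show ?thesis using assms hom_nonzero_on_P_if_nonzero_on_N by blast
  qed (use assms in blast)
  then obtain m n v where mn: "{P m n} \<in> J" "f {P m n} = {v}"
    using hom_basis_image by blast
  show ?thesis
  proof (cases v)
    case (P a b)
    with mn have "m \<le> a \<and> n \<le> b" using hom_image_of_P by blast
    with mn P show ?thesis by blast
  next
    case (N a b)
    with mn show ?thesis by blast
  qed
qed

end

theorem lemmaA2:
  fixes J :: "m2 set" and f :: "m2 \<Rightarrow> m2" and p q :: int
  assumes "bigraded_ideal J"
    and "shifted_hom p q J f"
    and "\<exists>x\<in>J. f x \<noteq> {}"
  shows "let CI = (typeI J \<and>
                ((\<exists>m n. {P m n} \<in> J \<and> (\<exists>a b. a \<ge> m \<and> b \<ge> n \<and> f {P m n} = {P a b}))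
               \<or> (\<exists>m n. {P m n} \<in> J \<and> (\<exists>a b. f {P m n} = {N a b}))));
             CII = (typeII J \<and>
                (\<exists>m n. {N m n} \<in> J \<and> (\<exists>a b. a \<le> m \<and> b \<le> n \<and> f {N m n} = {N a b})))
         in (CI \<and> \<not> CII) \<or> (\<not> CI \<and> CII)"
proof -
  note J = assms(1) and hom = assms(2)
  have ideal: "m2_ideal J" using J by (rule bigraded_ideal_imp_m2_ideal)
  obtain u where u: "{u} \<in> J" "f {u} \<noteq> {}"
    using hom_nonzero_on_basis[OF ideal hom J] assms(3) by blast
  show ?thesis
  proof (cases "typeII J")
    case True
    then have "\<not> typeI J" using not_typeII_if_typeI by blast
    with True show ?thesis
      unfolding Let_def using hom_typeII_witness[OF ideal hom True u] by simp
  next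
    case False
    then obtain m n where P: "{P m n} \<in> J" using P_in_bigraded_ideal_if_not_typeII[OF J] by blast
    with False show ?thesis
      unfolding Let_def
      using typeI_if_P_in_bigraded_ideal[OF J P] hom_typeI_witness[OF ideal hom P u] by simp
  qed
qed

end
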